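(* Let $X=X_\Sigma$ be the projective toric manifold described in the context (Picard number three, no Fano contraction, with parameters $p_0,\dots,p_4$, $b_1,\dots,b_{p_3}$, $c_2,\dots,c_{p_2}$, normalized so that $c_2=\min\{c_2,\dots,c_{p_2}\}$ and $b_1=\min\{b_1,\dots,b_{p_3}\}$). If $\mathrm{ch}_2(X)$ is nef, then $b_1\ge 1$ and $p_2>p_3$; in particular $p_2\ge 2$.
   Context: Let $N=\mathbb{Z}^d$ and let $\Sigma$ be a smooth projective complete fan in $N_\mathbb{R}$ whose set of primitive ray generators is $\{v_1,\dots,v_{p_0},y_1,\dots,y_{p_1},z_1,\dots,z_{p_2},t_1,\dots,t_{p_3},u_1,\dots,u_{p_4}\}$, where $p_0,\dots,p_4$ are positive integers with $p_0+p_1+p_2+p_3+p_4-3=d$. A primitive collection is a set of ray generators not generating a cone of $\Sigma$ while every proper subset does. The primitive collections of $\Sigma$ are exactly $\{v_i\}\cup\{y_j\}$, $\{y_j\}\cup\{z_j\}$, $\{z_j\}\cup\{t_j\}$, $\{t_j\}\cup\{u_j\}$, $\{u_j\}\cup\{v_j\}$ (all elements of the indicated groups), with primitive relations $v_1+\cdots+v_{p_0}+y_1+\cdots+y_{p_1}=c_2z_2+\cdots+c_{p_2}z_{p_2}+(b_1+1)t_1+\cdots+(b_{p_3}+1)t_{p_3}$, $y_1+\cdots+y_{p_1}+z_1+\cdots+z_{p_2}=u_1+\cdots+u_{p_4}$, $z_1+\cdots+z_{p_2}+t_1+\cdots+t_{p_3}=0$, $t_1+\cdots+t_{p_3}+u_1+\cdots+u_{p_4}=y_1+\cdots+y_{p_1}$,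 $u_1+\cdots+u_{p_4}+v_1+\cdots+v_{p_0}=c_2z_2+\cdots+c_{p_2}z_{p_2}+b_1t_1+\cdots+b_{p_3}t_{p_3}$, with $b_i,c_j\in\mathbb{Z}_{\ge0}$, and $c_2=\min_j c_j$, $b_1=\min_i b_i$. (Every projective toric manifold of Picard number three without Fano contraction has such a fan.) $X=X_\Sigma$. With $D_1,\dots,D_n$ the torus invariant prime divisors, $\mathrm{ch}_2(X)=\frac12\sum D_i^2$, and $\mathrm{ch}_2(X)$ is nef if $(\mathrm{ch}_2(X)\cdot S)\ge0$ for every 2-dimensional torus invariant irreducible closed subvariety $S\subset X$. *)

theory Defs
  imports "HOL-Analysis.Analysis" "HOL-Library.Multiset"
begin

text \<open>Ray generators are indexed by pairs (g,k): group g in {0..4}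
  (0 = v, 1 = y, 2 = z, 3 = t, 4 = u) and position k in {1..p g}.
  The lattice N = Z^d is int^'n with CARD('n) = d.\<close>

definition rays :: "(nat \<Rightarrow> nat) \<Rightarrow> (nat \<times> nat) set" where
  "rays p = {(g, k). g < 5 \<and> 1 \<le> k \<and> k \<le> p g}"

definition grp :: "(nat \<Rightarrow> nat) \<Rightarrow> nat \<Rightarrow> (nat \<times> nat) set" where
  "grp p g = {(g, k) | k. 1 \<le> k \<and> k \<le> p g}"

definition gsum :: "(nat \<times> nat \<Rightarrow> int ^ 'n) \<Rightarrow> (nat \<Rightarrow> nat) \<Rightarrow> nat \<Rightarrow> int ^ 'n" where
  "gsum w p g = (\<Sum>k = 1..p g. w (g, k))"

definition ipair :: "int ^ 'n \<Rightarrow> int ^ 'n \<Rightarrow> int" where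
  "ipair m v = (\<Sum>i\<in>UNIV. m $ i * v $ i)"

definition rvec :: "int ^ 'n \<Rightarrow> real ^ 'n" where
  "rvec v = (\<chi> i. real_of_int (v $ i))"

definition rcone :: "(nat \<times> nat \<Rightarrow> int ^ 'n) \<Rightarrow> (nat \<times> nat) set \<Rightarrow> (real ^ 'n) set" where
  "rcone w S = {x. \<exists>c. (\<forall>r\<in>S. c r \<ge> 0) \<and> x = (\<Sum>r\<in>S. c r *\<^sub>R rvec (w r))}"

definition int_basis :: "(int ^ 'n) set \<Rightarrow> bool" where
  "int_basis B \<longleftrightarrow> finite B \<and>
     (\<forall>x. \<exists>!c. (\<forall>b. b \<notin> B \<longrightarrow> c b = 0) \<and> x = (\<Sum>b\<in>B. c b *s b))"

text \<open>Sigma, given by its cones (each cone recorded as the set of indices of its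
  ray generators), is a smooth projective complete fan with ray generators w ` R.\<close>
definition smooth_projective_complete_fan ::
  "(nat \<times> nat) set set \<Rightarrow> (nat \<times> nat) set \<Rightarrow> (nat \<times> nat \<Rightarrow> int ^ 'n) \<Rightarrow> bool" where
  "smooth_projective_complete_fan \<Sigma> R w \<longleftrightarrow>
     finite R \<and> inj_on w R \<and>
     (\<forall>\<sigma>\<in>\<Sigma>. \<sigma> \<subseteq> R) \<and> {} \<in> \<Sigma> \<and> (\<forall>r\<in>R. {r} \<in> \<Sigma>) \<and>
     (\<forall>\<sigma>\<in>\<Sigma>. \<forall>\<tau>. \<tau> \<subseteq> \<sigma> \<longrightarrow> \<tau> \<in> \<Sigma>) \<and>
     \<comment> \<open>fan: two cones meet in a common face\<close>
     (\<forall>\<sigma>\<in>\<Sigma>. \<forall>\<tau>\<in>\<Sigma>. rcone w \<sigma> \<inter> rcone w \<tau> = rcone w (\<sigma> \<inter> \<tau>)) \<and>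
     \<comment> \<open>smooth: generators of every cone are part of a Z-basis of N\<close>
     (\<forall>\<sigma>\<in>\<Sigma>. inj_on w \<sigma> \<and> (\<exists>B. w ` \<sigma> \<subseteq> B \<and> int_basis B)) \<and>
     \<comment> \<open>complete: the support is all of N_R\<close>
     (\<Union>\<sigma>\<in>\<Sigma>. rcone w \<sigma>) = UNIV \<and>
     \<comment> \<open>projective: there is a strictly convex support function\<close>
     (\<exists>\<phi>::nat \<times> nat \<Rightarrow> real. \<forall>\<sigma>\<in>\<Sigma>. card \<sigma> = CARD('n) \<longrightarrow>
        (\<exists>m::real ^ 'n. (\<forall>r\<in>\<sigma>. m \<bullet> rvec (w r) = \<phi> r) \<and>
                        (\<forall>r\<in>R - \<sigma>. m \<bullet> rvec (w r) > \<phi> r)))"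

definition primitive_collection ::
  "(nat \<times> nat) set set \<Rightarrow> (nat \<times> nat) set \<Rightarrow> (nat \<times> nat) set \<Rightarrow> bool" where
  "primitive_collection \<Sigma> R P \<longleftrightarrow> P \<subseteq> R \<and> P \<notin> \<Sigma> \<and> (\<forall>Q. Q \<subset> P \<longrightarrow> Q \<in> \<Sigma>)"

text \<open>Intersection numbers D_{i_1} ... D_{i_d} on the smooth complete toric variety
  X_Sigma, as a function of the multiset {#i_1,...,i_d#} of ray indices.  They are
  characterised (Fulton, Intro. to toric varieties, 5.1-5.2) by: products of distinct
  divisors are 1 on maximal cones and 0 on non-cones (Stanley-Reisner relations), and
  the linear equivalences sum_i <m,v_i> D_i = 0 for m in M.\<close>
definition intersection_numbers ::
  "(nat \<times> nat) set set \<Rightarrow> (nat \<times> nat) set \<Rightarrow> (nat \<times> nat \<Rightarrow> int ^ 'n)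
     \<Rightarrow> ((nat \<times> nat) multiset \<Rightarrow> int) \<Rightarrow> bool" where
  "intersection_numbers \<Sigma> R w I \<longleftrightarrow>
     (\<forall>A. set_mset A \<subseteq> R \<and> size A = CARD('n) \<and> set_mset A \<notin> \<Sigma> \<longrightarrow> I A = 0) \<and>
     (\<forall>\<sigma>\<in>\<Sigma>. card \<sigma> = CARD('n) \<longrightarrow> I (mset_set \<sigma>) = 1) \<and>
     (\<forall>m::int ^ 'n. \<forall>B. set_mset B \<subseteq> R \<and> size B + 1 = CARD('n) \<longrightarrow>
        (\<Sum>r\<in>R. ipair m (w r) * I (B + {#r#})) = 0)"

text \<open>(ch_2(X) . V(tau)) = 1/2 sum_i (D_i^2 . V(tau)), where V(tau) is the orbit closure
  of a cone tau; V(tau) = prod_{rho in tau} D_rho on a smooth toric variety.\<close>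
definition ch2_dot ::
  "(nat \<times> nat) set \<Rightarrow> ((nat \<times> nat) multiset \<Rightarrow> int) \<Rightarrow> (nat \<times> nat) set \<Rightarrow> real" where
  "ch2_dot R I \<tau> = (1/2) * (\<Sum>r\<in>R. real_of_int (I ({#r, r#} + mset_set \<tau>)))"

text \<open>The 2-dimensional torus invariant irreducible closed subvarieties are exactly the
  V(tau) with tau a cone of dimension d-2.\<close>
definition ch2_nef ::
  "(nat \<times> nat) set set \<Rightarrow> (nat \<times> nat) set \<Rightarrow> ((nat \<times> nat) multiset \<Rightarrow> int) \<Rightarrow> nat \<Rightarrow> bool" where
  "ch2_nef \<Sigma> R I d \<longleftrightarrow> (\<forall>\<tau>\<in>\<Sigma>. card \<tau> + 2 = d \<longrightarrow> ch2_dot R I \<tau> \<ge> 0)"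

end

theory Submission
  imports Defs
begin

text \<open>Let \<open>\<tau>\<close> be the cone spanned by all generators except \<open>v\<^sub>1, y\<^sub>1, z\<^sub>1, t\<^sub>1, u\<^sub>1\<close>.
  It contains no primitive collection, so \<open>V(\<tau>)\<close> is a torus-invariant surface. The numbers
  \<open>D\<^sub>x D\<^sub>y V(\<tau>)\<close> satisfy the linear relations \<open>\<Sum>\<^sub>y D\<^sub>x D\<^sub>y V(\<tau>) y = 0\<close>; since the
  generators of a smooth cone are linearly independent, any relation among the generators that
  agrees with them off a smooth cone containing \<open>\<tau> \<union> {x}\<close> agrees with them everywhere.
  Combinations of the five primitive relations provide such a relation for every \<open>x\<close>, which
  gives \<open>2 ch\<^sub>2(X) V(\<tau>) = \<Sum>\<^sub>x D\<^sub>x\<^sup>2 V(\<tau>) \<le> b\<^sub>1 (p\<^sub>2 - p\<^sub>3) - p\<^sub>1 - p\<^sub>3 - p\<^sub>4\<close>.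
  Nefness makes the right-hand side non-negative, forcing \<open>b\<^sub>1 \<ge> 1\<close> and \<open>p\<^sub>2 > p\<^sub>3\<close>.\<close>

lemma smooth_projective_complete_fanD:
  assumes "smooth_projective_complete_fan \<Sigma> R w"
  shows "finite R" and "\<And>\<sigma>. \<sigma> \<in> \<Sigma> \<Longrightarrow> \<sigma> \<subseteq> R"
    and "\<And>\<sigma> \<tau>. \<sigma> \<in> \<Sigma> \<Longrightarrow> \<tau> \<subseteq> \<sigma> \<Longrightarrow> \<tau> \<in> \<Sigma>"
    and "\<And>\<sigma>. \<sigma> \<in> \<Sigma> \<Longrightarrow> inj_on w \<sigma> \<and> (\<exists>B. w ` \<sigma> \<subseteq> B \<and> int_basis B)"
proof -
  have "finite R \<and> (\<forall>\<sigma>\<in>\<Sigma>. \<sigma> \<subseteq> R) \<and> (\<forall>\<sigma>\<in>\<Sigma>. \<forall>\<tau>. \<tau> \<subseteq> \<sigma> \<longrightarrow> \<tau> \<in> \<Sigma>)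
    \<and> (\<forall>\<sigma>\<in>\<Sigma>. inj_on w \<sigma> \<and> (\<exists>B. w ` \<sigma> \<subseteq> B \<and> int_basis B))"
    using assms unfolding smooth_projective_complete_fan_def by (elim conjE) (intro conjI; assumption)
  then show "finite R" and "\<And>\<sigma>. \<sigma> \<in> \<Sigma> \<Longrightarrow> \<sigma> \<subseteq> R"
    and "\<And>\<sigma> \<tau>. \<sigma> \<in> \<Sigma> \<Longrightarrow> \<tau> \<subseteq> \<sigma> \<Longrightarrow> \<tau> \<in> \<Sigma>"
    and "\<And>\<sigma>. \<sigma> \<in> \<Sigma> \<Longrightarrow> inj_on w \<sigma> \<and> (\<exists>B. w ` \<sigma> \<subseteq> B \<and> int_basis B)"
    by simp_all
qed

lemma int_basis_independent:
  fixes f :: "'a \<Rightarrow> int ^ 'n"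
  assumes B: "int_basis B" and inj: "inj_on f A" and sub: "f ` A \<subseteq> B"
    and rel: "(\<Sum>x\<in>A. c x *s f x) = 0" and x: "x \<in> A"
  shows "c x = 0"
proof -
  define rep where "rep e \<longleftrightarrow> (\<forall>v. v \<notin> B \<longrightarrow> e v = 0) \<and> 0 = (\<Sum>v\<in>B. e v *s v)"
    for e :: "int ^ 'n \<Rightarrow> int"
  have finB: "finite B"
    using B unfolding int_basis_def by (elim conjE)
  have "\<exists>!e. rep e"
    using B unfolding int_basis_def rep_def by (elim conjE allE)
  define d where "d v = (if v \<in> f ` A then c (the_inv_into A f v) else 0)" for v
  have "(\<Sum>v\<in>B. d v *s v) = (\<Sum>v\<in>f ` A. d v *s v)"
    using sub finB by (intro sum.mono_neutral_right) (auto simp: d_def)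
  also have "\<dots> = (\<Sum>x\<in>A. c x *s f x)"
    by (rule sum.reindex_cong[OF inj refl]) (simp add: d_def the_inv_into_f_f[OF inj])
  finally have "rep d" using rel sub by (auto simp: rep_def d_def)
  moreover have "rep (\<lambda>_. 0)" by (simp add: rep_def)
  ultimately have "d = (\<lambda>_. 0)" using \<open>\<exists>!e. rep e\<close> unfolding Ex1_def by blast
  then have "d (f x) = 0" by simp
  then show ?thesis using x inj by (simp add: d_def the_inv_into_f_f)
qed

lemma ipair_axis: "ipair (axis i 1) v = v $ i"
proof -
  have "ipair (axis i 1) v = (\<Sum>j\<in>UNIV. if j = i then v $ j else 0)"
    unfolding ipair_def by (rule sum.cong) (auto simp: axis_def)
  then show ?thesis by simp
qed

lemma intersection_numbersD:
  fixes w :: "nat \<times> nat \<Rightarrow> int ^ 'n"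
  assumes "intersection_numbers \<Sigma> R w I"
  shows "\<And>A. set_mset A \<subseteq> R \<Longrightarrow> size A = CARD('n) \<Longrightarrow> set_mset A \<notin> \<Sigma> \<Longrightarrow> I A = 0"
    and "\<And>\<sigma>. \<sigma> \<in> \<Sigma> \<Longrightarrow> card \<sigma> = CARD('n) \<Longrightarrow> I (mset_set \<sigma>) = 1"
    and "\<And>m M. set_mset M \<subseteq> R \<Longrightarrow> size M + 1 = CARD('n) \<Longrightarrow>
           (\<Sum>r\<in>R. ipair m (w r) * I (M + {#r#})) = 0"
proof -
  have noncone: "\<forall>A. set_mset A \<subseteq> R \<and> size A = CARD('n) \<and> set_mset A \<notin> \<Sigma> \<longrightarrow> I A = 0"
    using assms unfolding intersection_numbers_def by (elim conjE) assumption
  have cone: "\<forall>\<sigma>\<in>\<Sigma>. card \<sigma> = CARD('n) \<longrightarrow> I (mset_set \<sigma>) = 1"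
    using assms unfolding intersection_numbers_def by (elim conjE) assumption
  have linear: "\<forall>m::int ^ 'n. \<forall>M. set_mset M \<subseteq> R \<and> size M + 1 = CARD('n) \<longrightarrow>
      (\<Sum>r\<in>R. ipair m (w r) * I (M + {#r#})) = 0"
    using assms unfolding intersection_numbers_def by (elim conjE) assumption
  show "\<And>A. set_mset A \<subseteq> R \<Longrightarrow> size A = CARD('n) \<Longrightarrow> set_mset A \<notin> \<Sigma> \<Longrightarrow> I A = 0"
    using noncone by simp
  show "\<And>\<sigma>. \<sigma> \<in> \<Sigma> \<Longrightarrow> card \<sigma> = CARD('n) \<Longrightarrow> I (mset_set \<sigma>) = 1"
    using cone by simp
  show "\<And>m M. set_mset M \<subseteq> R \<Longrightarrow> size M + 1 = CARD('n) \<Longrightarrow>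
      (\<Sum>r\<in>R. ipair m (w r) * I (M + {#r#})) = 0"
    using linear by simp
qed

lemma intersection_numbers_vector_relation:
  fixes w :: "nat \<times> nat \<Rightarrow> int ^ 'n"
  assumes "intersection_numbers \<Sigma> R w I" "set_mset M \<subseteq> R" "size M + 1 = CARD('n)"
  shows "(\<Sum>r\<in>R. I (M + {#r#}) *s w r) = 0"
  unfolding vec_eq_iff
proof
  fix i
  have "(\<Sum>r\<in>R. ipair (axis i 1) (w r) * I (M + {#r#})) = 0"
    using intersection_numbersD(3)[OF assms] .
  then show "(\<Sum>r\<in>R. I (M + {#r#}) *s w r) $ i = 0 $ i"
    by (simp add: ipair_axis sum_component mult.commute)
qed

lemma intersection_numbers_wall_relation:
  fixes w :: "nat \<times> nat \<Rightarrow> int ^ 'n"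
  assumes fan: "smooth_projective_complete_fan \<Sigma> R w"
    and I: "intersection_numbers \<Sigma> R w I"
    and M: "set_mset M \<subseteq> R" "size M + 1 = CARD('n)"
    and \<sigma>: "\<sigma> \<in> \<Sigma>"
    and rel: "(\<Sum>r\<in>R. c r *s w r) = 0"
    and outside: "\<And>r. r \<in> R - \<sigma> \<Longrightarrow> I (M + {#r#}) = c r"
    and r: "r \<in> R"
  shows "I (M + {#r#}) = c r"
proof (cases "r \<in> \<sigma>")
  case True
  define e where "e r = I (M + {#r#}) - c r" for r
  have "(\<Sum>r\<in>R. e r *s w r) = 0"
    using intersection_numbers_vector_relation[OF I M] rel
    by (simp add: e_def vector_sub_rdistrib sum_subtractf)
  moreover have "(\<Sum>r\<in>R. e r *s w r) = (\<Sum>r\<in>\<sigma>. e r *s w r)"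
    using outside smooth_projective_complete_fanD(1)[OF fan]
      smooth_projective_complete_fanD(2)[OF fan \<sigma>]
    by (intro sum.mono_neutral_right) (auto simp: e_def)
  moreover obtain B where "inj_on w \<sigma>" "w ` \<sigma> \<subseteq> B" "int_basis B"
    using smooth_projective_complete_fanD(4)[OF fan \<sigma>] by blast
  ultimately have "e r = 0" using int_basis_independent[of B w \<sigma> e r] True by simp
  then show ?thesis by (simp add: e_def)
qed (use outside r in blast)

lemma cone_iff_no_primitive_collection:
  assumes closed: "\<And>\<sigma> \<tau>. \<sigma> \<in> \<Sigma> \<Longrightarrow> \<tau> \<subseteq> \<sigma> \<Longrightarrow> \<tau> \<in> \<Sigma>"
    and A: "A \<subseteq> R" "finite A"
  shows "A \<in> \<Sigma> \<longleftrightarrow> (\<forall>P. primitive_collection \<Sigma> R P \<longrightarrow> \<not> P \<subseteq> A)"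
proof
  show "A \<in> \<Sigma> \<Longrightarrow> \<forall>P. primitive_collection \<Sigma> R P \<longrightarrow> \<not> P \<subseteq> A"
    using closed unfolding primitive_collection_def by blast
next
  assume no_prim: "\<forall>P. primitive_collection \<Sigma> R P \<longrightarrow> \<not> P \<subseteq> A"
  show "A \<in> \<Sigma>"
  proof (rule ccontr)
    assume "A \<notin> \<Sigma>"
    then have "\<exists>P. (P \<subseteq> A \<and> P \<notin> \<Sigma>) \<and> (\<forall>Q. Q \<subseteq> A \<and> Q \<notin> \<Sigma> \<longrightarrow> card P \<le> card Q)"
      by (intro ex_has_least_nat[of "\<lambda>Q. Q \<subseteq> A \<and> Q \<notin> \<Sigma>" A]) simp
    then obtain P where P: "P \<subseteq> A \<and> P \<notin> \<Sigma>"
      and least: "\<forall>Q. Q \<subseteq> A \<and> Q \<notin> \<Sigma> \<longrightarrow> card P \<le> card Q"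
      by blast
    have "Q \<in> \<Sigma>" if "Q \<subset> P" for Q
    proof (rule ccontr)
      assume "Q \<notin> \<Sigma>"
      then have "card P \<le> card Q" using least that P by blast
      moreover have "card Q < card P"
        using that P A(2) by (meson finite_subset psubset_card_mono)
      ultimately show False by simp
    qed
    then have "primitive_collection \<Sigma> R P"
      using P A unfolding primitive_collection_def by blast
    with no_prim P show False by blast
  qed
qed

lemma sum_rays: "(\<Sum>x\<in>rays p. f x) = (\<Sum>g<5. \<Sum>k = 1..p g. f (g, k))"
proof -
  have "rays p = Sigma {..<5} (\<lambda>g. {1..p g})" by (auto simp: rays_def)
  then show ?thesis by (simp add: sum.Sigma)
qed

lemma sum_scaled_add:
  fixes v :: "'a \<Rightarrow> int ^ 'n"
  shows "(\<Sum>y\<in>A. (f y + k * g y) *s v y)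
           = (\<Sum>y\<in>A. f y *s v y) + k *s (\<Sum>y\<in>A. g y *s v y)"
  by (simp add: vec_eq_iff sum_distrib_left sum.distrib[symmetric] algebra_simps)

definition pentagon_adjacent :: "nat \<Rightarrow> nat \<Rightarrow> bool" where
  "pentagon_adjacent g h \<longleftrightarrow> h = (g + 1) mod 5 \<or> g = (h + 1) mod 5"

lemma pentagon_not_adjacent_self: "\<not> pentagon_adjacent g g"
  unfolding pentagon_adjacent_def by presburger

definition grp_ind :: "nat \<Rightarrow> nat \<times> nat \<Rightarrow> int" where
  "grp_ind g x = (if fst x = g then 1 else 0)"

locale pentagon_fan =
  fixes p :: "nat \<Rightarrow> nat"
    and b c :: "nat \<Rightarrow> nat"
    and w :: "nat \<times> nat \<Rightarrow> int ^ 'n"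
    and \<Sigma> :: "(nat \<times> nat) set set"
    and I :: "(nat \<times> nat) multiset \<Rightarrow> int"
  assumes p_pos: "\<forall>g<5. p g \<ge> 1"
    and dim: "CARD('n) + 3 = p 0 + p 1 + p 2 + p 3 + p 4"
    and fan: "smooth_projective_complete_fan \<Sigma> (rays p) w"
    and prim: "{P. primitive_collection \<Sigma> (rays p) P}
                 = {grp p g \<union> grp p ((g + 1) mod 5) | g. g < 5}"
    and rel1: "gsum w p 0 + gsum w p 1
                 = (\<Sum>j = 2..p 2. int (c j) *s w (2, j)) + (\<Sum>i = 1..p 3. int (b i + 1) *s w (3, i))"
    and rel2: "gsum w p 1 + gsum w p 2 = gsum w p 4"
    and rel3: "gsum w p 2 + gsum w p 3 = 0"
    and rel4: "gsum w p 3 + gsum w p 4 = gsum w p 1"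
    and rel5: "gsum w p 4 + gsum w p 0
                 = (\<Sum>j = 2..p 2. int (c j) *s w (2, j)) + (\<Sum>i = 1..p 3. int (b i) *s w (3, i))"
    and intersection: "intersection_numbers \<Sigma> (rays p) w I"
begin

abbreviation R :: "(nat \<times> nat) set" where "R \<equiv> rays p"

definition first_rays :: "(nat \<times> nat) set" where
  "first_rays = {(g, 1) | g. g < 5}"

definition tau :: "(nat \<times> nat) set" where
  "tau = R - first_rays"

definition dot_tau :: "nat \<times> nat \<Rightarrow> nat \<times> nat \<Rightarrow> int" where
  "dot_tau x y = I (add_mset y (add_mset x (mset_set tau)))"

lemma mem_rays: "x \<in> R \<longleftrightarrow> fst x < 5 \<and> 1 \<le> snd x \<and> snd x \<le> p (fst x)"
  by (cases x) (auto simp: rays_def)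

lemma mem_first_rays: "x \<in> first_rays \<longleftrightarrow> fst x < 5 \<and> snd x = 1"
  by (cases x) (auto simp: first_rays_def)

lemma mem_tau: "x \<in> tau \<longleftrightarrow> fst x < 5 \<and> 2 \<le> snd x \<and> snd x \<le> p (fst x)"
  by (auto simp: tau_def mem_rays mem_first_rays)

lemma first_rays_subset_rays: "first_rays \<subseteq> R"
  using p_pos by (auto simp: mem_first_rays mem_rays)

lemma finite_tau: "finite tau"
  using smooth_projective_complete_fanD(1)[OF fan] by (simp add: tau_def)

lemma card_tau: "card tau + 2 = CARD('n)"
proof -
  have "card R = (\<Sum>g<5. p g)"
    using sum_rays[of "\<lambda>_. 1::nat" p] by simp
  moreover have "card first_rays = 5"
  proof -
    have "first_rays = (\<lambda>g. (g, 1::nat)) ` {..<5}" by (auto simp: first_rays_def)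
    moreover have "card ((\<lambda>g. (g, 1::nat)) ` {..<5::nat}) = 5" by (simp add: card_image inj_on_def)
    ultimately show ?thesis by simp
  qed
  moreover have "card tau = card R - card first_rays"
    unfolding tau_def using first_rays_subset_rays smooth_projective_complete_fanD(1)[OF fan]
    by (meson card_Diff_subset finite_subset)
  moreover have "1 \<le> p 0" "1 \<le> p 1" "1 \<le> p 2" "1 \<le> p 3" "1 \<le> p 4"
    using p_pos by auto
  ultimately show ?thesis using dim by (simp add: eval_nat_numeral)
qed

lemma in_fan_iff:
  assumes "A \<subseteq> R" "finite A"
  shows "A \<in> \<Sigma> \<longleftrightarrow> (\<forall>g<5. \<not> grp p g \<union> grp p ((g + 1) mod 5) \<subseteq> A)"
proof -
  have prim_iff: "primitive_collection \<Sigma> R P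
      \<longleftrightarrow> P \<in> {grp p g \<union> grp p ((g + 1) mod 5) | g. g < 5}" for P
    unfolding prim[symmetric] by simp
  have "A \<in> \<Sigma> \<longleftrightarrow> (\<forall>P. primitive_collection \<Sigma> R P \<longrightarrow> \<not> P \<subseteq> A)"
    using smooth_projective_complete_fanD(3)[OF fan] assms by (rule cone_iff_no_primitive_collection)
  also have "\<dots> \<longleftrightarrow> (\<forall>g<5. \<not> grp p g \<union> grp p ((g + 1) mod 5) \<subseteq> A)"
    unfolding prim_iff by blast
  finally show ?thesis .
qed

lemma grp_subset_tau_union:
  assumes g: "g < 5" and X: "X \<subseteq> first_rays"
  shows "grp p g \<subseteq> tau \<union> X \<longleftrightarrow> (g, 1) \<in> X"
proof
  assume "grp p g \<subseteq> tau \<union> X"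
  moreover have "(g, 1) \<in> grp p g" using p_pos g by (simp add: grp_def)
  moreover have "(g, 1) \<notin> tau" by (simp add: mem_tau)
  ultimately show "(g, 1) \<in> X" by blast
next
  assume g1: "(g, 1) \<in> X"
  show "grp p g \<subseteq> tau \<union> X"
  proof
    fix y assume "y \<in> grp p g"
    then obtain k where "y = (g, k)" "1 \<le> k" "k \<le> p g" by (auto simp: grp_def)
    then show "y \<in> tau \<union> X" using g g1 by (cases "k = 1") (auto simp: mem_tau)
  qed
qed

lemma tau_union_in_fan:
  assumes X: "X \<subseteq> first_rays"
  shows "tau \<union> X \<in> \<Sigma> \<longleftrightarrow> (\<forall>g<5. \<not> ((g, 1) \<in> X \<and> ((g + 1) mod 5, 1) \<in> X))"
proof -
  have "tau \<union> X \<subseteq> R" using X first_rays_subset_rays by (auto simp: tau_def)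
  moreover have "finite (tau \<union> X)"
    using X finite_subset[OF first_rays_subset_rays] smooth_projective_complete_fanD(1)[OF fan]
    finite_tau by (meson finite_UnI finite_subset)
  ultimately show ?thesis
    using grp_subset_tau_union[OF _ X] by (simp add: in_fan_iff)
qed

lemma tau_pair_in_fan:
  assumes "g < 5" "h < 5"
  shows "tau \<union> {(g, 1), (h, 1)} \<in> \<Sigma> \<longleftrightarrow> \<not> pentagon_adjacent g h"
proof -
  have sub: "{(g, 1), (h, 1)} \<subseteq> first_rays" using assms by (simp add: mem_first_rays)
  have ne: "Suc k mod 5 \<noteq> k" "k \<noteq> Suc k mod 5" for k :: nat by presburger+
  show ?thesis
    unfolding tau_union_in_fan[OF sub] using assms by (auto simp: pentagon_adjacent_def ne)
qed

lemma tau_in_fan: "tau \<in> \<Sigma>"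
  using tau_pair_in_fan[of 0 0] smooth_projective_complete_fanD(3)[OF fan]
  by (auto simp: pentagon_adjacent_def)

lemma dot_tau_commute: "dot_tau x y = dot_tau y x"
  by (simp add: dot_tau_def add_mset_commute)

lemma dot_tau_first_rays:
  assumes gh: "g < 5" "h < 5" "g \<noteq> h"
  shows "dot_tau (g, 1) (h, 1) = (if pentagon_adjacent g h then 0 else 1)"
proof -
  let ?\<sigma> = "tau \<union> {(g, 1), (h, 1)}"
  have fresh: "(g, 1) \<notin> tau" "(h, 1) \<notin> tau" by (simp_all add: mem_tau)
  have mset: "add_mset (h, 1) (add_mset (g, 1) (mset_set tau)) = mset_set ?\<sigma>"
    using fresh gh finite_tau by (simp add: insert_commute)
  have card: "card ?\<sigma> = CARD('n)"
    using fresh gh finite_tau card_tau by (simp add: insert_commute)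
  have "?\<sigma> \<subseteq> R" using gh first_rays_subset_rays by (auto simp: tau_def mem_first_rays)
  moreover have "set_mset (mset_set ?\<sigma>) = ?\<sigma>" "size (mset_set ?\<sigma>) = CARD('n)"
    using finite_tau card by simp_all
  ultimately show ?thesis
    using intersection_numbersD[OF intersection] card tau_pair_in_fan[OF gh(1,2)]
    unfolding dot_tau_def mset by (metis (no_types, lifting))
qed

lemma sum_rays_grp:
  assumes "g < 5"
  shows "(\<Sum>x\<in>R. (if fst x = g then h (snd x) else 0) *s w x)
           = (\<Sum>k = 1..p g. h k *s w (g, k))"
proof -
  have "(\<Sum>x\<in>R. (if fst x = g then h (snd x) else 0) *s w x)
      = (\<Sum>g'<5. if g' = g then (\<Sum>k = 1..p g. h k *s w (g, k)) else 0)"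
    unfolding sum_rays by (rule sum.cong) auto
  then show ?thesis using assms by simp
qed

definition c_coeff :: "nat \<times> nat \<Rightarrow> int" where
  "c_coeff x = (if fst x = 2 then if 2 \<le> snd x then int (c (snd x)) else 0 else 0)"

definition b_coeff :: "nat \<times> nat \<Rightarrow> int" where
  "b_coeff x = (if fst x = 3 then int (b (snd x)) else 0)"

lemma sum_grp_ind: "g < 5 \<Longrightarrow> (\<Sum>x\<in>R. grp_ind g x *s w x) = gsum w p g"
  using sum_rays_grp[of g "\<lambda>_. 1"] by (simp add: grp_ind_def gsum_def)

lemma sum_c_coeff: "(\<Sum>x\<in>R. c_coeff x *s w x) = (\<Sum>j = 2..p 2. int (c j) *s w (2, j))"
proof -
  have "(\<Sum>x\<in>R. c_coeff x *s w x)
      = (\<Sum>k = 1..p 2. (if 2 \<le> k then int (c k) else 0) *s w (2, k))"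
    using sum_rays_grp[of 2 "\<lambda>k. if 2 \<le> k then int (c k) else 0"] by (simp add: c_coeff_def)
  also have "\<dots> = (\<Sum>j = 2..p 2. int (c j) *s w (2, j))"
    using p_pos by (simp add: sum.atLeast_Suc_atMost numeral_2_eq_2)
  finally show ?thesis .
qed

lemma sum_b_coeff: "(\<Sum>x\<in>R. b_coeff x *s w x) = (\<Sum>i = 1..p 3. int (b i) *s w (3, i))"
  using sum_rays_grp[of 3 "\<lambda>k. int (b k)"] by (simp add: b_coeff_def)

definition rho1 :: "nat \<times> nat \<Rightarrow> int" where
  "rho1 x = grp_ind 0 x + grp_ind 1 x - c_coeff x - b_coeff x - grp_ind 3 x"

definition rho2 :: "nat \<times> nat \<Rightarrow> int" where
  "rho2 x = grp_ind 1 x + grp_ind 2 x - grp_ind 4 x"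

definition rho3 :: "nat \<times> nat \<Rightarrow> int" where
  "rho3 x = grp_ind 2 x + grp_ind 3 x"

definition rho4 :: "nat \<times> nat \<Rightarrow> int" where
  "rho4 x = grp_ind 3 x + grp_ind 4 x - grp_ind 1 x"

definition rho5 :: "nat \<times> nat \<Rightarrow> int" where
  "rho5 x = grp_ind 4 x + grp_ind 0 x - c_coeff x - b_coeff x"

lemmas sum_coeff = sum_grp_ind sum_c_coeff sum_b_coeff

lemmas sum_linear = vector_sadd_rdistrib vector_sub_rdistrib sum.distrib sum_subtractf

lemma relation_rho1: "(\<Sum>x\<in>R. rho1 x *s w x) = 0"
proof -
  have "(\<Sum>i = 1..p 3. int (b i + 1) *s w (3, i))
      = (\<Sum>i = 1..p 3. int (b i) *s w (3, i)) + gsum w p 3"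
    by (simp add: gsum_def sum_linear)
  then show ?thesis using rel1 by (simp add: rho1_def sum_linear sum_coeff algebra_simps)
qed

lemma relation_rho2: "(\<Sum>x\<in>R. rho2 x *s w x) = 0"
  using rel2 by (simp add: rho2_def sum_linear sum_coeff)

lemma relation_rho3: "(\<Sum>x\<in>R. rho3 x *s w x) = 0"
  using rel3 by (simp add: rho3_def sum_linear sum_coeff)

lemma relation_rho4: "(\<Sum>x\<in>R. rho4 x *s w x) = 0"
  using rel4 by (simp add: rho4_def sum_linear sum_coeff algebra_simps)

lemma relation_rho5: "(\<Sum>x\<in>R. rho5 x *s w x) = 0"
  using rel5 by (simp add: rho5_def sum_linear sum_coeff algebra_simps)

text \<open>Row \<open>x\<close> is a combination of the primitive relations. The matrix is symmetric and
  turns out to be the matrix of the numbers \<open>dot_tau x y\<close>.\<close>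

definition tau_form :: "nat \<times> nat \<Rightarrow> nat \<times> nat \<Rightarrow> int" where
  "tau_form x y =
     (if fst x = 0 then rho3 y
      else if fst x = 1 then rho4 y
      else if fst x = 2 then rho5 y + (int (b 1) - c_coeff x) * rho3 y
      else if fst x = 3 then rho1 y + (int (b 1) - b_coeff x) * rho3 y
      else rho2 y)"

lemma relation_tau_form: "(\<Sum>y\<in>R. tau_form x y *s w y) = 0"
proof -
  have add_rho3: "(\<Sum>y\<in>R. f y *s w y + k * rho3 y *s w y) = 0"
    if "(\<Sum>y\<in>R. f y *s w y) = 0" for f k
    using sum_scaled_add[of f k rho3 w R] that relation_rho3 by simp
  consider "fst x = 0" | "fst x = 1" | "fst x = 2" | "fst x = 3" | "fst x \<notin> {0, 1, 2, 3}"
    by auto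
  then show ?thesis
    by cases (simp_all add: tau_form_def relation_rho1 relation_rho2 relation_rho3 relation_rho4
        relation_rho5 add_rho3)
qed

lemmas coeff_defs =
  rho1_def rho2_def rho3_def rho4_def rho5_def grp_ind_def c_coeff_def b_coeff_def

lemma tau_form_commute:
  assumes "fst x < 5" "fst y < 5"
  shows "tau_form x y = tau_form y x"
proof -
  have "fst x \<in> {0, 1, 2, 3, 4}" "fst y \<in> {0, 1, 2, 3, 4}" using assms by auto
  then show ?thesis by (auto simp: tau_form_def coeff_defs)
qed

lemma tau_form_first_rays:
  assumes "g < 5" "h < 5" "g \<noteq> h"
  shows "tau_form (g, 1) (h, 1) = (if pentagon_adjacent g h then 0 else 1)"
proof -
  have "g \<in> {0, 1, 2, 3, 4}" "h \<in> {0, 1, 2, 3, 4}" using assms by auto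
  then show ?thesis using assms by (auto simp: tau_form_def coeff_defs pentagon_adjacent_def)
qed

lemma dot_tau_eq_tau_form_if_agree_off_cone:
  assumes x: "x \<in> R" and \<sigma>: "\<sigma> \<in> \<Sigma>"
    and agree: "\<And>s. s \<in> R - \<sigma> \<Longrightarrow> dot_tau x s = tau_form x s"
    and y: "y \<in> R"
  shows "dot_tau x y = tau_form x y"
proof -
  let ?M = "add_mset x (mset_set tau)"
  have M: "set_mset ?M \<subseteq> R" "size ?M + 1 = CARD('n)"
    using x finite_tau card_tau by (auto simp: tau_def)
  have "I (?M + {#s#}) = tau_form x s" if "s \<in> R - \<sigma>" for s
    using agree[OF that] by (simp add: dot_tau_def)
  then have "I (?M + {#y#}) = tau_form x y"
    by (rule intersection_numbers_wall_relation[OF fan intersection M \<sigma> relation_tau_form _ y])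
  then show ?thesis by (simp add: dot_tau_def)
qed

lemma dot_tau_first_row:
  assumes g: "g < 5" and y: "y \<in> R"
  shows "dot_tau (g, 1) y = tau_form (g, 1) y"
proof (rule dot_tau_eq_tau_form_if_agree_off_cone[OF _ _ _ y])
  show "(g, 1) \<in> R" using g first_rays_subset_rays by (auto simp: mem_first_rays)
  show "tau \<union> {(g, 1)} \<in> \<Sigma>"
    using tau_pair_in_fan[OF g g] by (simp add: pentagon_not_adjacent_self)
  fix s assume "s \<in> R - (tau \<union> {(g, 1)})"
  then obtain h where "s = (h, 1)" "h < 5" "h \<noteq> g"
    by (cases s) (auto simp: tau_def mem_first_rays)
  then show "dot_tau (g, 1) s = tau_form (g, 1) s"
    using g dot_tau_first_rays[of g h] tau_form_first_rays[of g h] by simp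
qed

lemma dot_tau_eq_tau_form:
  assumes x: "x \<in> R" and y: "y \<in> R"
  shows "dot_tau x y = tau_form x y"
proof (cases "x \<in> first_rays")
  case True
  then show ?thesis using dot_tau_first_row[OF _ y] by (cases x) (auto simp: mem_first_rays)
next
  case False
  show ?thesis
  proof (rule dot_tau_eq_tau_form_if_agree_off_cone[OF x tau_in_fan _ y])
    fix s assume s: "s \<in> R - tau"
    then have "s \<in> first_rays" by (simp add: tau_def)
    then obtain h where "s = (h, 1)" "h < 5" by (cases s) (auto simp: mem_first_rays)
    then have "dot_tau s x = tau_form s x" using dot_tau_first_row x by simp
    then show "dot_tau x s = tau_form x s"
      using s x by (simp add: dot_tau_commute tau_form_commute mem_rays)
  qed
qed

lemma ch2_dot_tau: "ch2_dot R I tau = real_of_int (\<Sum>x\<in>R. tau_form x x) / 2"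
proof -
  have "I ({#x, x#} + mset_set tau) = tau_form x x" if "x \<in> R" for x
    using dot_tau_eq_tau_form[OF that that] by (simp add: dot_tau_def)
  then show ?thesis by (simp add: ch2_dot_def)
qed

lemma sum_tau_form_diag_le:
  assumes b_min: "\<forall>i\<in>{1..p 3}. b 1 \<le> b i"
  shows "(\<Sum>x\<in>R. tau_form x x)
           \<le> int (p 2) * int (b 1) - int (p 3) * (int (b 1) + 1) - int (p 1) - int (p 4)"
proof -
  define bound :: "nat \<Rightarrow> int" where
    "bound g = (if g = 0 then 0 else if g = 2 then int (b 1)
                else if g = 3 then - int (b 1) - 1 else -1)" for g
  have "tau_form x x \<le> bound (fst x)" if "x \<in> R" for x
  proof -
    have grp: "fst x \<in> {0, 1, 2, 3, 4}" and "1 \<le> snd x" "snd x \<le> p (fst x)"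
      using that by (auto simp: mem_rays)
    then have "fst x = 3 \<Longrightarrow> b 1 \<le> b (snd x)" using b_min by auto
    with grp show ?thesis by (auto simp: tau_form_def coeff_defs bound_def)
  qed
  then have "(\<Sum>x\<in>R. tau_form x x) \<le> (\<Sum>x\<in>R. bound (fst x))" by (rule sum_mono)
  also have "\<dots> = (\<Sum>g<5. int (p g) * bound g)" by (simp add: sum_rays)
  also have "\<dots> = int (p 2) * int (b 1) - int (p 3) * (int (b 1) + 1) - int (p 1) - int (p 4)"
    by (simp add: eval_nat_numeral bound_def algebra_simps)
  finally show ?thesis .
qed

end

theorem lemma3p2:
  fixes p :: "nat \<Rightarrow> nat"
    and b c :: "nat \<Rightarrow> nat"
    and w :: "nat \<times> nat \<Rightarrow> int ^ 'n"
    and \<Sigma> :: "(nat \<times> nat) set set"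
    and I :: "(nat \<times> nat) multiset \<Rightarrow> int"
  assumes p_pos: "\<forall>g<5. p g \<ge> 1"
    and dim: "CARD('n) + 3 = p 0 + p 1 + p 2 + p 3 + p 4"
    and fan: "smooth_projective_complete_fan \<Sigma> (rays p) w"
    and prim: "{P. primitive_collection \<Sigma> (rays p) P}
                 = {grp p g \<union> grp p ((g + 1) mod 5) | g. g < 5}"
    and rel1: "gsum w p 0 + gsum w p 1
                 = (\<Sum>j = 2..p 2. int (c j) *s w (2, j)) + (\<Sum>i = 1..p 3. int (b i + 1) *s w (3, i))"
    and rel2: "gsum w p 1 + gsum w p 2 = gsum w p 4"
    and rel3: "gsum w p 2 + gsum w p 3 = 0"
    and rel4: "gsum w p 3 + gsum w p 4 = gsum w p 1"
    and rel5: "gsum w p 4 + gsum w p 0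
                 = (\<Sum>j = 2..p 2. int (c j) *s w (2, j)) + (\<Sum>i = 1..p 3. int (b i) *s w (3, i))"
    and c_min: "\<forall>j\<in>{2..p 2}. c 2 \<le> c j"
    and b_min: "\<forall>i\<in>{1..p 3}. b 1 \<le> b i"
    and I: "intersection_numbers \<Sigma> (rays p) w I"
    and nef: "ch2_nef \<Sigma> (rays p) I CARD('n)"
  shows "b 1 \<ge> 1 \<and> p 2 > p 3 \<and> p 2 \<ge> 2"
proof -
  interpret pentagon_fan p b c w \<Sigma> I
    using p_pos dim fan prim rel1 rel2 rel3 rel4 rel5 I by unfold_locales
  have "ch2_dot (rays p) I tau \<ge> 0"
    using nef tau_in_fan card_tau unfolding ch2_nef_def by blast
  then have "0 \<le> (\<Sum>x\<in>rays p. tau_form x x)"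
    unfolding ch2_dot_tau by (simp del: of_int_sum)
  then have key: "int (p 3) * int (b 1) + int (p 1) + int (p 3) + int (p 4) \<le> int (p 2) * int (b 1)"
    using sum_tau_form_diag_le[OF b_min] by (simp add: algebra_simps)
  have p: "1 \<le> p 1" "1 \<le> p 3" "1 \<le> p 4" using p_pos by auto
  have "1 \<le> b 1"
  proof (rule ccontr)
    assume "\<not> 1 \<le> b 1"
    then have "b 1 = 0" by simp
    with key p show False by simp
  qed
  moreover have "p 3 < p 2"
  proof -
    from key p have "int (p 3) * int (b 1) < int (p 2) * int (b 1)" by linarith
    then show ?thesis by (simp add: mult_less_cancel_right)
  qed
  ultimately show ?thesis using p by simp
qed

end
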